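(* There exists an integral domain $R$ with the U-FF property such that the polynomial ring $R[w]$ does not have the U-FF property.
   Context: An integral domain has the U-FF property if every nonzero element that is a unit or a finite product of irreducible elements has only finitely many factorizations into irreducibles, counted up to order and associates. *)

theory Defs
  imports "HOL-Algebra.Algebra"
begin

text \<open>Units have exactly the empty factorization.\<close>
definition factorizations :: "('a, 'b) ring_scheme \<Rightarrow> 'a \<Rightarrow> 'a list set" where
  "factorizations R a = {fs. set fs \<subseteq> carrier (mult_of R) \<and> wfactors (mult_of R) fs a}"

text \<open>U-FF: every nonzero element that is a unit or a finite product of irreducibles has only
  finitely many factorizations, counted up to order and associates.\<close>
definition U_FF :: "('a, 'b) ring_scheme \<Rightarrow> bool" where
  "U_FF R \<longleftrightarrow> (\<forall>a \<in> carrier (mult_of R). factorizations R a \<noteq> {} \<longrightarrow>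
      finite (factorizations R a // {(fs, gs). essentially_equal (mult_of R) fs gs}))"

end

theory Submission
  imports Defs "HOL-Algebra.Weak_Morphisms" "HOL-Library.Poly_Mapping" "HOL-Library.Z2"
    "HOL-Library.Countable"
begin

(* The witness is the monoid algebra R = F_2[M] of the monoid
   M = {(a, b, c) \<in> Q^3. 0 \<le> a \<le> c, 0 \<le> b \<le> c}.  Since M is 2-divisible and R has
   characteristic 2, every element of R is a square; so R has no irreducible elements at all
   and is U-FF for trivial reasons.  In R[w], however, for every rational B \<in> [0, 1]
     (X^(0,B,1) w + X^(1,B,1)) (X^(1,1-B,1) w + X^(0,1-B,1))
   is one and the same polynomial.  Divisors of monomials are monomials (M is cancellative and
   linearly orderable), so the two coefficients of each factor have no common non-unit divisor
   and each factor is irreducible; distinct B give non-associated factors, hence infinitely many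
   factorizations.  Finally R is carried over to a ring on nat set along an injective encoding
   of its elements. *)

section \<open>Factorizations\<close>

lemma U_FF_if_no_irreducibles:
  assumes "\<And>x. x \<in> carrier (mult_of R) \<Longrightarrow> \<not> irreducible (mult_of R) x"
  shows "U_FF R"
  unfolding U_FF_def
proof (intro ballI impI)
  fix a
  have "fs = []" if "fs \<in> factorizations R a" for fs
  proof (cases fs)
    case (Cons x xs)
    with that have "x \<in> carrier (mult_of R)" "irreducible (mult_of R) x"
      by (auto simp: factorizations_def wfactors_def simp del: carrier_mult_of)
    with assms show ?thesis
      by blast
  qed
  then have "factorizations R a \<subseteq> {[]}"
    by blast
  then have "finite (factorizations R a)"
    by (rule finite_subset) simp
  then show "finite (factorizations R a // {(fs, gs). essentially_equal (mult_of R) fs gs})"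
    unfolding quotient_def by simp
qed

lemma (in domain) not_irreducible_if_all_squares:
  assumes squares: "\<And>x. x \<in> carrier R \<Longrightarrow> \<exists>s\<in>carrier R. s \<otimes> s = x"
    and x: "x \<in> carrier (mult_of R)"
  shows "\<not> irreducible (mult_of R) x"
proof
  assume "irreducible (mult_of R) x"
  with x have irr: "ring_irreducible x"
    by (intro ring_irreducibleI') simp_all
  have xR: "x \<in> carrier R"
    using x by simp
  obtain s where s: "s \<in> carrier R" "s \<otimes> s = x"
    using squares[OF xR] by blast
  have "s \<in> Units R \<or> s \<in> Units R"
    by (rule ring_irreducibleE(5)[OF xR irr s(1) s(1) s(2)[symmetric]])
  then have "x \<in> Units R"
    using s(2) Units_m_closed by blast
  then show False
    using ring_irreducibleE(4)[OF xR irr] by contradiction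
qed

lemma (in domain) two_irreducibles_in_factorizations:
  assumes "f \<in> carrier (mult_of R)" "g \<in> carrier (mult_of R)"
    and "irreducible (mult_of R) f" "irreducible (mult_of R) g"
  shows "[f, g] \<in> factorizations R (f \<otimes> g)"
proof -
  have "f \<otimes>\<^bsub>mult_of R\<^esub> g \<in> carrier (mult_of R)"
    using assms(1,2) by (simp add: integral_iff)
  then have "foldr (\<otimes>\<^bsub>mult_of R\<^esub>) [f, g] \<one>\<^bsub>mult_of R\<^esub> \<sim>\<^bsub>mult_of R\<^esub> f \<otimes> g"
    using assms(2) by simp
  then show ?thesis
    using assms unfolding factorizations_def wfactors_def by simp
qed

lemma (in monoid) essentially_equal_imp_associated_member:
  assumes "essentially_equal G fs gs" "g \<in> set gs"
  shows "\<exists>f\<in>set fs. f \<sim> g"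
proof -
  obtain fs' where perm: "fs <~~> fs'" and assoc: "fs' [\<sim>] gs"
    using assms(1) by (rule essentially_equalE)
  obtain i where i: "i < length gs" "g = gs ! i"
    using assms(2) by (auto simp: in_set_conv_nth)
  then have "fs' ! i \<in> set fs'" "fs' ! i \<sim> g"
    using assoc by (auto simp: list_all2_conv_all_nth)
  then show ?thesis
    using perm by (metis mset_eq_setD)
qed

lemma (in domain) not_U_FF_if_infinitely_many_factorizations:
  assumes a: "a \<in> carrier (mult_of R)" and I: "infinite I"
    and F: "\<And>i. i \<in> I \<Longrightarrow> F i \<in> factorizations R a"
    and distinct: "\<And>i j. i \<in> I \<Longrightarrow> j \<in> I \<Longrightarrow>
      essentially_equal (mult_of R) (F i) (F j) \<Longrightarrow> i = j"
  shows "\<not> U_FF R"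
proof
  let ?r = "{(fs, gs). essentially_equal (mult_of R) fs gs}"
  let ?class = "\<lambda>i. ?r `` {F i}"
  assume "U_FF R"
  moreover have "factorizations R a \<noteq> {}"
    using F I by (metis finite.emptyI ex_in_conv)
  ultimately have "finite (factorizations R a // ?r)"
    using a unfolding U_FF_def by blast
  moreover have "?class ` I \<subseteq> factorizations R a // ?r"
    using F by (blast intro: quotientI)
  moreover have "inj_on ?class I"
  proof (rule inj_onI)
    fix i j assume i: "i \<in> I" and j: "j \<in> I" and eq: "?class i = ?class j"
    have "set (F j) \<subseteq> carrier (mult_of R)"
      using F[OF j] by (simp add: factorizations_def)
    then have "F j \<in> ?class j"
      by simp
    then show "i = j"
      using distinct[OF i j] eq by auto
  qed
  ultimately show False
    using I by (metis finite_imageD finite_subset)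
qed

section \<open>Linear polynomials\<close>

context UP_ring
begin

definition linear_poly :: "'a \<Rightarrow> 'a \<Rightarrow> nat \<Rightarrow> 'a" where
  "linear_poly a b = up_ring.monom P a 1 \<oplus>\<^bsub>P\<^esub> up_ring.monom P b 0"

lemma linear_poly_closed [simp]:
  "a \<in> carrier R \<Longrightarrow> b \<in> carrier R \<Longrightarrow> linear_poly a b \<in> carrier P"
  by (simp add: linear_poly_def)

lemma coeff_linear_poly:
  assumes "a \<in> carrier R" "b \<in> carrier R"
  shows "up_ring.coeff P (linear_poly a b) n = (if n = 1 then a else if n = 0 then b else \<zero>)"
  using assms by (simp add: linear_poly_def)

lemma linear_poly_mult:
  assumes "a \<in> carrier R" "b \<in> carrier R" "c \<in> carrier R" "d \<in> carrier R"
  shows "linear_poly a b \<otimes>\<^bsub>P\<^esub> linear_poly c d =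
    up_ring.monom P (a \<otimes> c) 2 \<oplus>\<^bsub>P\<^esub> up_ring.monom P (a \<otimes> d) 1 \<oplus>\<^bsub>P\<^esub>
    up_ring.monom P (b \<otimes> c) 1 \<oplus>\<^bsub>P\<^esub> up_ring.monom P (b \<otimes> d) 0"
proof -
  have "linear_poly a b \<otimes>\<^bsub>P\<^esub> linear_poly c d =
      up_ring.monom P a 1 \<otimes>\<^bsub>P\<^esub> up_ring.monom P c 1 \<oplus>\<^bsub>P\<^esub>
      up_ring.monom P a 1 \<otimes>\<^bsub>P\<^esub> up_ring.monom P d 0 \<oplus>\<^bsub>P\<^esub>
      up_ring.monom P b 0 \<otimes>\<^bsub>P\<^esub> up_ring.monom P c 1 \<oplus>\<^bsub>P\<^esub>
      up_ring.monom P b 0 \<otimes>\<^bsub>P\<^esub> up_ring.monom P d 0"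
    using assms by (simp add: linear_poly_def UP_l_distr UP_r_distr UP_a_assoc P.a_lcomm)
  then show ?thesis
    using assms by (simp add: numeral_2_eq_2 monom_mult[symmetric] del: monom_mult)
qed

end

context UP_domain
begin

lemma deg_linear_poly:
  assumes "a \<in> carrier R" "b \<in> carrier R" "a \<noteq> \<zero>"
  shows "deg R (linear_poly a b) = 1"
proof (rule antisym)
  show "deg R (linear_poly a b) \<le> 1"
    by (rule deg_aboveI) (use assms in \<open>simp_all add: coeff_linear_poly\<close>)
  show "1 \<le> deg R (linear_poly a b)"
    by (rule deg_belowI) (use assms in \<open>simp_all add: coeff_linear_poly\<close>)
qed

lemma linear_poly_nonzero:
  assumes "a \<in> carrier R" "b \<in> carrier R" "a \<noteq> \<zero>"
  shows "linear_poly a b \<noteq> \<zero>\<^bsub>P\<^esub>"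
  using deg_linear_poly[OF assms] by (metis deg_zero zero_neq_one)

lemma deg_Units:
  assumes "p \<in> Units P"
  shows "deg R p = 0"
proof -
  obtain q where p: "p \<in> carrier P" and q: "q \<in> carrier P" and pq: "p \<otimes>\<^bsub>P\<^esub> q = \<one>\<^bsub>P\<^esub>"
    using assms unfolding Units_def by blast
  then have "p \<noteq> \<zero>\<^bsub>P\<^esub>" "q \<noteq> \<zero>\<^bsub>P\<^esub>"
    using UP_one_not_zero by (metis P.l_null, metis P.r_null)
  then have "deg R (p \<otimes>\<^bsub>P\<^esub> q) = deg R p + deg R q"
    using p q by simp
  then show ?thesis
    using pq by simp
qed

lemma monom_Units:
  assumes "c \<in> Units R"
  shows "up_ring.monom P c 0 \<in> Units P"
proof -
  have c: "c \<in> carrier R" "inv c \<in> carrier R"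
    using assms by auto
  have "up_ring.monom P c 0 \<otimes>\<^bsub>P\<^esub> up_ring.monom P (inv c) 0 = \<one>\<^bsub>P\<^esub>"
       "up_ring.monom P (inv c) 0 \<otimes>\<^bsub>P\<^esub> up_ring.monom P c 0 = \<one>\<^bsub>P\<^esub>"
    using monom_mult[OF c, of 0 0] monom_mult[OF c(2) c(1), of 0 0] assms
    by (simp_all del: monom_mult)
  then show ?thesis
    unfolding Units_def using c by auto
qed

lemma linear_poly_eq_constant_mult:
  assumes a: "a \<in> carrier R" and b: "b \<in> carrier R"
    and q: "q \<in> carrier P" and r: "r \<in> carrier P"
    and "deg R q = 0" and eq: "linear_poly a b = q \<otimes>\<^bsub>P\<^esub> r"
  shows "a = up_ring.coeff P q 0 \<otimes> up_ring.coeff P r 1"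
    and "b = up_ring.coeff P q 0 \<otimes> up_ring.coeff P r 0"
proof -
  have qm: "q = up_ring.monom P (up_ring.coeff P q 0) 0"
    using deg_zero_impl_monom[OF q \<open>deg R q = 0\<close>] .
  have "up_ring.coeff P (linear_poly a b) (n + 0) = up_ring.coeff P q 0 \<otimes> up_ring.coeff P r n"
    for n
    unfolding eq by (subst (1) qm) (rule coeff_monom_mult[OF coeff_closed[OF q] r])
  from this[of 1] this[of 0] show "a = up_ring.coeff P q 0 \<otimes> up_ring.coeff P r 1"
    and "b = up_ring.coeff P q 0 \<otimes> up_ring.coeff P r 0"
    using a b by (simp_all add: coeff_linear_poly)
qed

lemma linear_poly_irreducible:
  assumes a: "a \<in> carrier R" and b: "b \<in> carrier R" and a0: "a \<noteq> \<zero>"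
    and coprime: "\<And>c. c \<in> carrier R \<Longrightarrow> c divides a \<Longrightarrow> c divides b \<Longrightarrow> c \<in> Units R"
  shows "irreducible (mult_of P) (linear_poly a b)"
proof -
  have deg: "deg R (linear_poly a b) = 1"
    using deg_linear_poly[OF a b a0] .
  have lc: "linear_poly a b \<in> carrier P - {\<zero>\<^bsub>P\<^esub>}"
    using linear_poly_nonzero[OF a b a0] a b by simp
  have constant_factor_unit: "q \<in> Units P"
    if q: "q \<in> carrier P" and r: "r \<in> carrier P" and "deg R q = 0"
      and eq: "linear_poly a b = q \<otimes>\<^bsub>P\<^esub> r" for q r
  proof -
    note coeffs = linear_poly_eq_constant_mult[OF a b q r \<open>deg R q = 0\<close> eq]
    have "up_ring.coeff P q 0 divides a" "up_ring.coeff P q 0 divides b"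
      using coeffs q r by (auto intro: dividesI)
    then have "up_ring.coeff P q 0 \<in> Units R"
      using coprime q by simp
    then show ?thesis
      by (subst deg_zero_impl_monom[OF q \<open>deg R q = 0\<close>]) (rule monom_Units)
  qed
  have "ring_irreducible\<^bsub>P\<^esub> (linear_poly a b)"
  proof (rule ring_irreducibleI[OF lc])
    show "linear_poly a b \<notin> Units P"
      using deg_Units deg by (metis zero_neq_one)
    fix q r
    assume q: "q \<in> carrier P" and r: "r \<in> carrier P" and eq: "linear_poly a b = q \<otimes>\<^bsub>P\<^esub> r"
    moreover have "linear_poly a b \<noteq> \<zero>\<^bsub>P\<^esub>"
      using lc by simp
    ultimately have "q \<noteq> \<zero>\<^bsub>P\<^esub>" "r \<noteq> \<zero>\<^bsub>P\<^esub>"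
      by (metis P.l_null, metis P.r_null)
    then have "deg R q + deg R r = 1"
      using eq deg q r by simp
    then consider "deg R q = 0" | "deg R r = 0"
      by linarith
    then show "q \<in> Units P \<or> r \<in> Units P"
    proof cases
      case 1
      then show ?thesis using constant_factor_unit[OF q r _ eq] by blast
    next
      case 2
      have "linear_poly a b = r \<otimes>\<^bsub>P\<^esub> q"
        using eq q r by (simp add: P.m_comm)
      then show ?thesis
        using constant_factor_unit[OF r q 2] by blast
    qed
  qed
  then show ?thesis
    using ring_irreducibleE(3) lc by blast
qed

lemma linear_poly_divides_imp_divides:
  assumes a: "a \<in> carrier R" and b: "b \<in> carrier R" and a0: "a \<noteq> \<zero>"
    and a': "a' \<in> carrier R" and b': "b' \<in> carrier R" and a'0: "a' \<noteq> \<zero>"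
    and dvd: "linear_poly a b divides\<^bsub>mult_of P\<^esub> linear_poly a' b'"
  shows "a divides a'"
proof -
  obtain k where k: "k \<in> carrier P" "k \<noteq> \<zero>\<^bsub>P\<^esub>"
    and eq: "linear_poly a' b' = linear_poly a b \<otimes>\<^bsub>P\<^esub> k"
    using dvd unfolding factor_def by auto
  have "deg R (linear_poly a' b') = deg R (linear_poly a b) + deg R k"
    using eq k linear_poly_nonzero[OF a b a0] a b by simp
  then have "deg R k = 0"
    using deg_linear_poly[OF a b a0] deg_linear_poly[OF a' b' a'0] by simp
  moreover have "linear_poly a' b' = k \<otimes>\<^bsub>P\<^esub> linear_poly a b"
    using eq k a b by (simp add: P.m_comm)
  ultimately have "a' = up_ring.coeff P k 0 \<otimes> up_ring.coeff P (linear_poly a b) 1"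
    by (rule linear_poly_eq_constant_mult(1)[OF a' b' k(1) linear_poly_closed[OF a b]])
  then have "a' = a \<otimes> up_ring.coeff P k 0"
    using a b k by (simp add: coeff_linear_poly R.m_comm[OF coeff_closed[OF k(1)] a])
  then show ?thesis
    using k by (auto intro: dividesI)
qed

end

section \<open>Monoid algebras\<close>

lemma add_eq_add_of_le:
  fixes a b c d :: "'a::ordered_cancel_comm_monoid_add"
  assumes "a \<le> c" "b \<le> d" "a + b = c + d"
  shows "a = c \<and> b = d"
  using assms by (metis add_left_mono add_right_cancel add_right_mono antisym
      add_left_cancel)

lemma lookup_mult_unique_sum:
  fixes p q :: "'a::comm_monoid_add \<Rightarrow>\<^sub>0 'b::semiring_0"
  assumes "\<And>a' b'. a' \<in> Poly_Mapping.keys p \<Longrightarrow> b' \<in> Poly_Mapping.keys q \<Longrightarrow>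
      a' + b' = a + b \<Longrightarrow> a' = a \<and> b' = b"
  shows "Poly_Mapping.lookup (p * q) (a + b) = Poly_Mapping.lookup p a * Poly_Mapping.lookup q b"
proof -
  have fin: "finite {x. Poly_Mapping.lookup p x \<noteq> 0}" "finite {x. Poly_Mapping.lookup q x \<noteq> 0}"
    using finite_keys[of p] finite_keys[of q] by (simp_all add: in_keys_iff[symmetric])
  have "Poly_Mapping.lookup (p * q) (a + b) =
      (\<Sum>(x, y). Poly_Mapping.lookup p x * Poly_Mapping.lookup q y when a + b = x + y)"
    by (simp add: times_poly_mapping.rep_eq prod_fun_unfold_prod[OF fin])
  also have "\<dots> = Sum_any (\<lambda>xy.
      (case xy of (x, y) \<Rightarrow> Poly_Mapping.lookup p x * Poly_Mapping.lookup q y) when xy = (a, b))"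
  proof (rule Sum_any.cong, clarify)
    fix x y
    show "(Poly_Mapping.lookup p x * Poly_Mapping.lookup q y when a + b = x + y) =
        (Poly_Mapping.lookup p x * Poly_Mapping.lookup q y when (x, y) = (a, b))"
      using assms[of x y]
      by (cases "Poly_Mapping.lookup p x = 0"; cases "Poly_Mapping.lookup q y = 0")
        (auto simp: when_def in_keys_iff)
  qed
  finally show ?thesis
    by simp
qed

lemma extremal_sum_in_keys_mult:
  fixes p q :: "'a::comm_monoid_add \<Rightarrow>\<^sub>0 'b::semiring_no_zero_divisors"
  assumes "a \<in> Poly_Mapping.keys p" "b \<in> Poly_Mapping.keys q"
    and "\<And>a' b'. a' \<in> Poly_Mapping.keys p \<Longrightarrow> b' \<in> Poly_Mapping.keys q \<Longrightarrow>
      a' + b' = a + b \<Longrightarrow> a' = a \<and> b' = b"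
  shows "a + b \<in> Poly_Mapping.keys (p * q)"
proof -
  have "Poly_Mapping.lookup (p * q) (a + b) = Poly_Mapping.lookup p a * Poly_Mapping.lookup q b"
    by (rule lookup_mult_unique_sum[OF assms(3)])
  then show ?thesis
    using assms(1,2) by (simp add: in_keys_iff)
qed

text \<open>Over a linearly ordered exponent monoid, both the sum of the greatest exponents and the
  sum of the least exponents survive in a product; so only monomials divide a monomial.\<close>

lemma keys_singleton_if_mult_eq_single:
  fixes p q :: "'a::{ordered_cancel_comm_monoid_add, linorder} \<Rightarrow>\<^sub>0
    'b::semiring_no_zero_divisors"
  assumes pq: "p * q = Poly_Mapping.single e c" and "c \<noteq> 0"
  shows "\<exists>a b. Poly_Mapping.keys p = {a} \<and> Poly_Mapping.keys q = {b} \<and> a + b = e"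
proof -
  have "p \<noteq> 0" "q \<noteq> 0"
    using pq \<open>c \<noteq> 0\<close> by (metis lookup_single_eq lookup_zero mult_zero_left,
        metis lookup_single_eq lookup_zero mult_zero_right)
  then have fin: "finite (Poly_Mapping.keys p)" "Poly_Mapping.keys p \<noteq> {}"
    "finite (Poly_Mapping.keys q)" "Poly_Mapping.keys q \<noteq> {}"
    by simp_all
  define aM am bM bm where "aM = Max (Poly_Mapping.keys p)" "am = Min (Poly_Mapping.keys p)"
    "bM = Max (Poly_Mapping.keys q)" "bm = Min (Poly_Mapping.keys q)"
  have in_keys: "aM \<in> Poly_Mapping.keys p" "am \<in> Poly_Mapping.keys p"
    "bM \<in> Poly_Mapping.keys q" "bm \<in> Poly_Mapping.keys q"
    using fin by (simp_all add: aM_am_bM_bm_def)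
  have bounds: "am \<le> x \<and> x \<le> aM" if "x \<in> Poly_Mapping.keys p" for x
    using fin that by (simp add: aM_am_bM_bm_def)
  have bounds': "bm \<le> y \<and> y \<le> bM" if "y \<in> Poly_Mapping.keys q" for y
    using fin that by (simp add: aM_am_bM_bm_def)
  have "aM + bM \<in> Poly_Mapping.keys (p * q)"
  proof (rule extremal_sum_in_keys_mult[OF in_keys(1,3)])
    fix a b assume "a \<in> Poly_Mapping.keys p" "b \<in> Poly_Mapping.keys q" "a + b = aM + bM"
    then show "a = aM \<and> b = bM"
      using add_eq_add_of_le[of a aM b bM] bounds[of a] bounds'[of b] by simp
  qed
  moreover have "am + bm \<in> Poly_Mapping.keys (p * q)"
  proof (rule extremal_sum_in_keys_mult[OF in_keys(2,4)])
    fix a b assume "a \<in> Poly_Mapping.keys p" "b \<in> Poly_Mapping.keys q" "a + b = am + bm"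
    then show "a = am \<and> b = bm"
      using add_eq_add_of_le[of am a bm b] bounds[of a] bounds'[of b] by simp
  qed
  ultimately have "aM + bM = e" "am + bm = e"
    using pq \<open>c \<noteq> 0\<close> by auto
  then have "am = aM" "bm = bM"
    using add_eq_add_of_le[of am aM bm bM] bounds[OF in_keys(1)] bounds'[OF in_keys(3)]
    by simp_all
  then have "Poly_Mapping.keys p = {aM}" "Poly_Mapping.keys q = {bM}"
    using bounds bounds' in_keys by fastforce+
  then show ?thesis
    using \<open>aM + bM = e\<close> by blast
qed

lemma sum_square_char_two:
  fixes f :: "'b \<Rightarrow> 'a::comm_ring_1"
  assumes "(1::'a) + 1 = 0"
  shows "(\<Sum>i\<in>A. f i) * (\<Sum>i\<in>A. f i) = (\<Sum>i\<in>A. f i * f i)"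
proof (induction A rule: infinite_finite_induct)
  case (insert i A)
  have "(x + y) * (x + y) = x * x + y * y" for x y :: 'a
  proof -
    have "(x + y) * (x + y) = x * x + y * y + (1 + 1) * (x * y)"
      by (simp add: algebra_simps)
    then show ?thesis
      using assms by simp
  qed
  then show ?case
    using insert by simp
qed simp_all

lemma bit_poly_mapping_eqI:
  fixes p q :: "'a \<Rightarrow>\<^sub>0 bit"
  assumes "Poly_Mapping.keys p = Poly_Mapping.keys q"
  shows "p = q"
proof (rule poly_mapping_eqI)
  fix k
  show "Poly_Mapping.lookup p k = Poly_Mapping.lookup q k"
    using assms by (metis (full_types) bit_not_one_iff in_keys_iff)
qed

lemma bit_poly_mapping_eq_sum_singles:
  fixes p :: "'a \<Rightarrow>\<^sub>0 bit"
  shows "p = (\<Sum>e\<in>Poly_Mapping.keys p. Poly_Mapping.single e 1)"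
proof (rule poly_mapping_eqI)
  fix k
  have "Poly_Mapping.lookup (\<Sum>e\<in>Poly_Mapping.keys p. Poly_Mapping.single e (1::bit)) k =
      (if k \<in> Poly_Mapping.keys p then 1 else 0)"
    by (simp add: lookup_sum lookup_single when_def)
  then show "Poly_Mapping.lookup p k =
      Poly_Mapping.lookup (\<Sum>e\<in>Poly_Mapping.keys p. Poly_Mapping.single e 1) k"
    by (metis (full_types) bit_not_one_iff in_keys_iff)
qed

lemma bit_poly_mapping_square_root:
  fixes p :: "'a::comm_monoid_add \<Rightarrow>\<^sub>0 bit"
  assumes halves: "\<And>e. e \<in> Poly_Mapping.keys p \<Longrightarrow> \<exists>h\<in>S. h + h = e"
  shows "\<exists>q. Poly_Mapping.keys q \<subseteq> S \<and> q * q = p"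
proof -
  obtain h where h: "\<And>e. e \<in> Poly_Mapping.keys p \<Longrightarrow> h e \<in> S \<and> h e + h e = e"
    using halves by metis
  define q where "q = (\<Sum>e\<in>Poly_Mapping.keys p. Poly_Mapping.single (h e) (1::bit))"
  have "(1::'a \<Rightarrow>\<^sub>0 bit) + 1 = Poly_Mapping.single 0 (1 + 1)"
    by (simp only: single_add single_one)
  then have "(1::'a \<Rightarrow>\<^sub>0 bit) + 1 = 0"
    by simp
  then have "q * q =
      (\<Sum>e\<in>Poly_Mapping.keys p. Poly_Mapping.single (h e) 1 * Poly_Mapping.single (h e) 1)"
    unfolding q_def by (rule sum_square_char_two)
  also have "\<dots> = p"
    using h by (subst bit_poly_mapping_eq_sum_singles) (simp add: mult_single cong: sum.cong)
  finally have "q * q = p" .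
  moreover have "Poly_Mapping.keys q \<subseteq> S"
    unfolding q_def
    using keys_sum[of "\<lambda>e. Poly_Mapping.single (h e) (1::bit)" "Poly_Mapping.keys p"] h by auto
  ultimately show ?thesis
    by blast
qed

definition monoid_algebra :: "'a::comm_monoid_add set \<Rightarrow> ('a \<Rightarrow>\<^sub>0 'b::comm_ring_1) ring" where
  "monoid_algebra S =
     \<lparr>carrier = {p. Poly_Mapping.keys p \<subseteq> S}, monoid.mult = (*), one = 1,
      ring.zero = 0, add = (+)\<rparr>"

lemma domain_monoid_algebra:
  fixes S :: "'a::{ordered_cancel_comm_monoid_add, linorder} set"
  assumes zero: "0 \<in> S" and add: "\<And>x y. x \<in> S \<Longrightarrow> y \<in> S \<Longrightarrow> x + y \<in> S"
  shows "domain (monoid_algebra S :: ('a \<Rightarrow>\<^sub>0 'b::idom) ring)"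
proof -
  have mult: "Poly_Mapping.keys (p * q) \<subseteq> S" and plus: "Poly_Mapping.keys (p + q) \<subseteq> S"
    if "Poly_Mapping.keys p \<subseteq> S" "Poly_Mapping.keys q \<subseteq> S" for p q :: "'a \<Rightarrow>\<^sub>0 'b"
    using that keys_mult[of p q] keys_add[of p q] add by blast+
  show ?thesis
    unfolding monoid_algebra_def
    by unfold_locales
      (auto simp: mult plus zero algebra_simps Units_def intro!: exI[of _ "- x" for x])
qed

section \<open>The monoid algebra of the cone\<close>

(* Q^3 is modelled by nat \<Rightarrow>\<^sub>0 rat supported on {0, 1, 2}: unlike the product type, it carries
   the library's additive linear order, which domain_monoid_algebra needs. *)
definition vec3 :: "rat \<Rightarrow> rat \<Rightarrow> rat \<Rightarrow> nat \<Rightarrow>\<^sub>0 rat" where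
  "vec3 a b c = Poly_Mapping.single 0 a + Poly_Mapping.single 1 b + Poly_Mapping.single 2 c"

lemma lookup_vec3:
  "Poly_Mapping.lookup (vec3 a b c) k =
    (if k = 0 then a else if k = 1 then b else if k = 2 then c else 0)"
  by (simp add: vec3_def lookup_add lookup_single when_def)

lemma vec3_add: "vec3 a b c + vec3 a' b' c' = vec3 (a + a') (b + b') (c + c')"
  by (rule poly_mapping_eqI) (simp add: lookup_add lookup_vec3)

lemma vec3_zero: "vec3 0 0 0 = 0"
  by (simp add: vec3_def)

lemma vec3_eq_iff: "vec3 a b c = vec3 a' b' c' \<longleftrightarrow> a = a' \<and> b = b' \<and> c = c'"
proof
  assume "vec3 a b c = vec3 a' b' c'"
  then have "Poly_Mapping.lookup (vec3 a b c) k = Poly_Mapping.lookup (vec3 a' b' c') k" for k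
    by simp
  from this[of 0] this[of 1] this[of 2] show "a = a' \<and> b = b' \<and> c = c'"
    by (simp add: lookup_vec3)
qed simp

definition cone :: "(nat \<Rightarrow>\<^sub>0 rat) set" where
  "cone = {vec3 a b c | a b c. 0 \<le> a \<and> a \<le> c \<and> 0 \<le> b \<and> b \<le> c}"

lemma vec3_in_cone_iff: "vec3 a b c \<in> cone \<longleftrightarrow> 0 \<le> a \<and> a \<le> c \<and> 0 \<le> b \<and> b \<le> c"
  by (auto simp: cone_def vec3_eq_iff)

lemma zero_in_cone: "0 \<in> cone"
  using vec3_in_cone_iff[of 0 0 0] by (simp add: vec3_zero)

lemma cone_add: "x \<in> cone \<Longrightarrow> y \<in> cone \<Longrightarrow> x + y \<in> cone"
  by (auto simp: cone_def vec3_add vec3_eq_iff)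

lemma cone_halves:
  assumes "x \<in> cone"
  shows "\<exists>h\<in>cone. h + h = x"
proof -
  obtain a b c where "x = vec3 a b c" "0 \<le> a" "a \<le> c" "0 \<le> b" "b \<le> c"
    using assms by (auto simp: cone_def)
  then show ?thesis
    by (intro bexI[of _ "vec3 (a / 2) (b / 2) (c / 2)"]) (simp_all add: vec3_add vec3_in_cone_iff)
qed

lemma cone_pointed: "s \<in> cone \<Longrightarrow> t \<in> cone \<Longrightarrow> s + t = 0 \<Longrightarrow> s = 0"
  by (auto simp: cone_def vec3_add vec3_zero[symmetric] vec3_eq_iff)

lemma cone_common_summand_eq_zero:
  assumes "s \<in> cone" "t \<in> cone" "t' \<in> cone" "s + t = vec3 0 b 1" "s + t' = vec3 1 b' 1"
  shows "s = 0"
  using assms by (auto simp: cone_def vec3_add vec3_zero[symmetric] vec3_eq_iff)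

definition cone_algebra :: "((nat \<Rightarrow>\<^sub>0 rat) \<Rightarrow>\<^sub>0 bit) ring" where
  "cone_algebra = monoid_algebra cone"

lemma domain_cone_algebra: "domain cone_algebra"
  unfolding cone_algebra_def by (rule domain_monoid_algebra[OF zero_in_cone cone_add])

interpretation cone_algebra: domain cone_algebra
  by (rule domain_cone_algebra)

lemma carrier_cone_algebra: "carrier cone_algebra = {p. Poly_Mapping.keys p \<subseteq> cone}"
  by (simp add: cone_algebra_def monoid_algebra_def)

lemma mult_cone_algebra: "p \<otimes>\<^bsub>cone_algebra\<^esub> q = p * q"
  by (simp add: cone_algebra_def monoid_algebra_def)

definition vec3_coords :: "(nat \<Rightarrow>\<^sub>0 rat) \<Rightarrow> rat \<times> rat \<times> rat" where
  "vec3_coords e = (Poly_Mapping.lookup e 0, Poly_Mapping.lookup e 1, Poly_Mapping.lookup e 2)"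

definition encode :: "((nat \<Rightarrow>\<^sub>0 rat) \<Rightarrow>\<^sub>0 bit) \<Rightarrow> nat set" where
  "encode p = (to_nat \<circ> vec3_coords) ` Poly_Mapping.keys p"

lemma inj_on_encode: "inj_on encode (carrier cone_algebra)"
proof (rule inj_onI)
  fix p q
  assume "p \<in> carrier cone_algebra" "q \<in> carrier cone_algebra" and eq: "encode p = encode q"
  then have keys: "Poly_Mapping.keys p \<subseteq> cone" "Poly_Mapping.keys q \<subseteq> cone"
    by (simp_all add: carrier_cone_algebra)
  have "inj_on (to_nat \<circ> vec3_coords) cone"
    by (rule inj_onI) (auto simp: cone_def vec3_coords_def lookup_vec3)
  then have "Poly_Mapping.keys p = Poly_Mapping.keys q"
    using eq unfolding encode_def by (simp only: inj_on_image_eq_iff[OF _ keys])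
  then show "p = q"
    by (rule bit_poly_mapping_eqI)
qed

definition cone_ring :: "nat set ring" where
  "cone_ring = image_ring encode cone_algebra"

lemma encode_ring_iso: "encode \<in> ring_iso cone_algebra cone_ring"
  unfolding cone_ring_def by (rule inj_imp_image_ring_iso[OF inj_on_encode])

lemma domain_cone_ring: "domain cone_ring"
  unfolding cone_ring_def
  by (rule domain.inj_imp_image_ring_is_domain[OF domain_cone_algebra inj_on_encode])

interpretation cone_ring: domain cone_ring
  by (rule domain_cone_ring)

lemma carrier_cone_ring: "carrier cone_ring = encode ` carrier cone_algebra"
  by (simp add: cone_ring_def image_ring_carrier)

lemma encode_mult:
  "p \<in> carrier cone_algebra \<Longrightarrow> q \<in> carrier cone_algebra \<Longrightarrow>
    encode (p * q) = encode p \<otimes>\<^bsub>cone_ring\<^esub> encode q"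
  using ring_iso_memE(2)[OF encode_ring_iso] by (simp add: mult_cone_algebra)

lemma cone_ring_squares:
  "x \<in> carrier cone_ring \<Longrightarrow> \<exists>s\<in>carrier cone_ring. s \<otimes>\<^bsub>cone_ring\<^esub> s = x"
  using bit_poly_mapping_square_root[OF cone_halves]
  by (fastforce simp: carrier_cone_ring carrier_cone_algebra encode_mult[symmetric])

definition cone_monom :: "(nat \<Rightarrow>\<^sub>0 rat) \<Rightarrow> nat set" where
  "cone_monom e = encode (Poly_Mapping.single e 1)"

lemma single_in_carrier_cone_algebra:
  "e \<in> cone \<Longrightarrow> Poly_Mapping.single e 1 \<in> carrier cone_algebra"
  by (simp add: carrier_cone_algebra)

lemma cone_monom_closed: "e \<in> cone \<Longrightarrow> cone_monom e \<in> carrier cone_ring"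
  by (simp add: cone_monom_def carrier_cone_ring single_in_carrier_cone_algebra)

lemma cone_monom_add:
  "e \<in> cone \<Longrightarrow> e' \<in> cone \<Longrightarrow> cone_monom e \<otimes>\<^bsub>cone_ring\<^esub> cone_monom e' = cone_monom (e + e')"
  by (simp add: cone_monom_def encode_mult[symmetric] single_in_carrier_cone_algebra mult_single)

lemma cone_monom_zero: "cone_monom 0 = \<one>\<^bsub>cone_ring\<^esub>"
  by (simp add: cone_monom_def cone_ring_def image_ring_one cone_algebra_def monoid_algebra_def)

lemma cone_monom_nonzero: "cone_monom e \<noteq> \<zero>\<^bsub>cone_ring\<^esub>"
  by (simp add: cone_monom_def cone_ring_def image_ring_zero cone_algebra_def monoid_algebra_def
      encode_def)

lemma cone_monom_eq_iff:
  assumes "e \<in> cone" "e' \<in> cone"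
  shows "cone_monom e = cone_monom e' \<longleftrightarrow> e = e'"
proof
  assume "cone_monom e = cone_monom e'"
  then have "Poly_Mapping.single e (1::bit) = Poly_Mapping.single e' 1"
    using inj_onD[OF inj_on_encode] single_in_carrier_cone_algebra assms
    unfolding cone_monom_def by blast
  then show "e = e'"
    by (metis lookup_single_eq lookup_single_not_eq zero_neq_one)
qed simp

lemma cone_ring_factors_of_monom:
  assumes c: "c \<in> carrier cone_ring" and d: "d \<in> carrier cone_ring" and e: "e \<in> cone"
    and cd: "c \<otimes>\<^bsub>cone_ring\<^esub> d = cone_monom e"
  shows "\<exists>s\<in>cone. \<exists>t\<in>cone. c = cone_monom s \<and> d = cone_monom t \<and> s + t = e"
proof -
  obtain p q where p: "p \<in> carrier cone_algebra" "c = encode p"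
    and q: "q \<in> carrier cone_algebra" "d = encode q"
    using c d by (auto simp: carrier_cone_ring)
  have "encode (p * q) = encode (Poly_Mapping.single e 1)"
    using cd p q by (simp add: encode_mult cone_monom_def)
  moreover have "p * q \<in> carrier cone_algebra"
    using cone_algebra.m_closed[OF p(1) q(1)] by (simp add: mult_cone_algebra)
  ultimately have "p * q = Poly_Mapping.single e 1"
    using inj_onD[OF inj_on_encode] single_in_carrier_cone_algebra[OF e] by blast
  then obtain a b where ab: "Poly_Mapping.keys p = {a}" "Poly_Mapping.keys q = {b}" "a + b = e"
    using keys_singleton_if_mult_eq_single by blast
  then have "p = Poly_Mapping.single a 1" "q = Poly_Mapping.single b 1"
    by (simp_all add: bit_poly_mapping_eqI)
  moreover have "a \<in> cone" "b \<in> cone"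
    using p(1) q(1) ab by (auto simp: carrier_cone_algebra)
  ultimately show ?thesis
    using p(2) q(2) ab(3) by (auto simp: cone_monom_def)
qed

lemma divides_cone_monom:
  assumes "c \<in> carrier cone_ring" "e \<in> cone" "c divides\<^bsub>cone_ring\<^esub> cone_monom e"
  shows "\<exists>s\<in>cone. \<exists>t\<in>cone. c = cone_monom s \<and> s + t = e"
  using assms cone_ring_factors_of_monom unfolding factor_def by metis

lemma cone_monom_divides_antisym:
  assumes x: "x \<in> cone" and y: "y \<in> cone"
    and "cone_monom x divides\<^bsub>cone_ring\<^esub> cone_monom y"
    and "cone_monom y divides\<^bsub>cone_ring\<^esub> cone_monom x"
  shows "x = y"
proof -
  obtain t where t: "t \<in> cone" "x + t = y"
    using divides_cone_monom[OF cone_monom_closed[OF x] y assms(3)] x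
    by (auto simp: cone_monom_eq_iff)
  obtain t' where t': "t' \<in> cone" "y + t' = x"
    using divides_cone_monom[OF cone_monom_closed[OF y] x assms(4)] y
    by (auto simp: cone_monom_eq_iff)
  have "t + t' = 0"
    using t(2) t'(2) by (metis add.assoc add_cancel_right_right)
  then have "t = 0"
    using cone_pointed t(1) t'(1) by blast
  then show ?thesis
    using t(2) by simp
qed

lemma cone_monom_coprime:
  assumes c: "c \<in> carrier cone_ring" and bounds: "0 \<le> b" "b \<le> 1" "0 \<le> b'" "b' \<le> 1"
    and "c divides\<^bsub>cone_ring\<^esub> cone_monom (vec3 0 b 1)"
    and "c divides\<^bsub>cone_ring\<^esub> cone_monom (vec3 1 b' 1)"
  shows "c \<in> Units cone_ring"
proof -
  have cone: "vec3 0 b 1 \<in> cone" "vec3 1 b' 1 \<in> cone"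
    using bounds by (simp_all add: vec3_in_cone_iff)
  obtain s t where s: "s \<in> cone" "t \<in> cone" "c = cone_monom s" "s + t = vec3 0 b 1"
    using divides_cone_monom[OF c cone(1) assms(6)] by blast
  obtain s' t' where s': "s' \<in> cone" "t' \<in> cone" "c = cone_monom s'" "s' + t' = vec3 1 b' 1"
    using divides_cone_monom[OF c cone(2) assms(7)] by blast
  have "s' = s"
    using s s' cone_monom_eq_iff by simp
  then have "s = 0"
    using cone_common_summand_eq_zero[OF s(1,2) s'(2) s(4)] s'(4) by simp
  then show ?thesis
    using s(3) by (simp add: cone_monom_zero)
qed

section \<open>Polynomials over the cone ring\<close>

lemma UP_domain_cone_ring: "UP_domain cone_ring"
  by (simp add: UP_domain_def domain_cone_ring)

interpretation cone_poly: UP_ring cone_ring "UP cone_ring"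
  by (simp add: UP_ring_def cone_ring.ring_axioms)

interpretation cone_poly: domain "UP cone_ring"
  by (rule UP_domain.UP_domain[OF UP_domain_cone_ring])

definition left_factor :: "rat \<Rightarrow> nat \<Rightarrow> nat set" where
  "left_factor B = cone_poly.linear_poly (cone_monom (vec3 0 B 1)) (cone_monom (vec3 1 B 1))"

definition right_factor :: "rat \<Rightarrow> nat \<Rightarrow> nat set" where
  "right_factor B =
    cone_poly.linear_poly (cone_monom (vec3 1 (1 - B) 1)) (cone_monom (vec3 0 (1 - B) 1))"

lemma factor_coefficients_in_cone:
  assumes "B \<in> {0..1}"
  shows "vec3 0 B 1 \<in> cone" "vec3 1 B 1 \<in> cone"
    and "vec3 1 (1 - B) 1 \<in> cone" "vec3 0 (1 - B) 1 \<in> cone"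
  using assms by (simp_all add: vec3_in_cone_iff)

lemma left_factor_irreducible:
  assumes B: "B \<in> {0..1}"
  shows "irreducible (mult_of (UP cone_ring)) (left_factor B)"
  unfolding left_factor_def
proof (rule UP_domain.linear_poly_irreducible[OF UP_domain_cone_ring])
  fix c
  assume "c \<in> carrier cone_ring" "c divides\<^bsub>cone_ring\<^esub> cone_monom (vec3 0 B 1)"
    "c divides\<^bsub>cone_ring\<^esub> cone_monom (vec3 1 B 1)"
  then show "c \<in> Units cone_ring"
    using B by (intro cone_monom_coprime) auto
qed (use factor_coefficients_in_cone[OF B] in
    \<open>simp_all add: cone_monom_closed cone_monom_nonzero\<close>)

lemma right_factor_irreducible:
  assumes B: "B \<in> {0..1}"
  shows "irreducible (mult_of (UP cone_ring)) (right_factor B)"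
  unfolding right_factor_def
proof (rule UP_domain.linear_poly_irreducible[OF UP_domain_cone_ring])
  fix c
  assume "c \<in> carrier cone_ring" "c divides\<^bsub>cone_ring\<^esub> cone_monom (vec3 1 (1 - B) 1)"
    "c divides\<^bsub>cone_ring\<^esub> cone_monom (vec3 0 (1 - B) 1)"
  then show "c \<in> Units cone_ring"
    using B by (intro cone_monom_coprime) auto
qed (use factor_coefficients_in_cone[OF B] in
    \<open>simp_all add: cone_monom_closed cone_monom_nonzero\<close>)

lemma factors_in_carrier:
  assumes "B \<in> {0..1}"
  shows "left_factor B \<in> carrier (mult_of (UP cone_ring))"
    "right_factor B \<in> carrier (mult_of (UP cone_ring))"
  using factor_coefficients_in_cone[OF assms]
  by (simp_all add: left_factor_def right_factor_def cone_monom_closed cone_monom_nonzero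
      UP_domain.linear_poly_nonzero[OF UP_domain_cone_ring])

lemma left_factor_mult_right_factor:
  assumes "B \<in> {0..1}"
  shows "left_factor B \<otimes>\<^bsub>UP cone_ring\<^esub> right_factor B =
    left_factor 0 \<otimes>\<^bsub>UP cone_ring\<^esub> right_factor 0"
  using factor_coefficients_in_cone[OF assms] factor_coefficients_in_cone[of 0]
  by (simp add: left_factor_def right_factor_def cone_poly.linear_poly_mult cone_monom_closed
      cone_monom_add vec3_add)

lemma associated_linear_polys_eq:
  assumes "x \<in> cone" "x' \<in> cone" "b \<in> carrier cone_ring" "b' \<in> carrier cone_ring"
    and "cone_poly.linear_poly (cone_monom x) b \<sim>\<^bsub>mult_of (UP cone_ring)\<^esub>
      cone_poly.linear_poly (cone_monom x') b'"
  shows "x = x'"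
  using assms UP_domain.linear_poly_divides_imp_divides[OF UP_domain_cone_ring]
  by (intro cone_monom_divides_antisym)
    (auto simp: associated_def cone_monom_closed cone_monom_nonzero)

lemma factorizations_distinct:
  assumes B: "B \<in> {0..1}" and B': "B' \<in> {0..1}"
    and ee: "essentially_equal (mult_of (UP cone_ring)) [left_factor B, right_factor B]
      [left_factor B', right_factor B']"
  shows "B = B'"
proof -
  obtain f where "f \<in> {left_factor B, right_factor B}"
    and f: "f \<sim>\<^bsub>mult_of (UP cone_ring)\<^esub> left_factor B'"
    using cone_poly.mult_of.essentially_equal_imp_associated_member[OF ee] by auto
  then consider "left_factor B \<sim>\<^bsub>mult_of (UP cone_ring)\<^esub> left_factor B'"
    | "right_factor B \<sim>\<^bsub>mult_of (UP cone_ring)\<^esub> left_factor B'"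
    by blast
  then show ?thesis
  proof cases
    case 1
    then have "vec3 0 B 1 = vec3 0 B' 1"
      using factor_coefficients_in_cone[OF B] factor_coefficients_in_cone[OF B']
      by (intro associated_linear_polys_eq) (simp_all add: left_factor_def cone_monom_closed)
    then show ?thesis
      by (simp add: vec3_eq_iff)
  next
    case 2
    then have "vec3 1 (1 - B) 1 = vec3 0 B' 1"
      using factor_coefficients_in_cone[OF B] factor_coefficients_in_cone[OF B']
      by (intro associated_linear_polys_eq)
        (simp_all add: left_factor_def right_factor_def cone_monom_closed)
    then show ?thesis
      by (simp add: vec3_eq_iff)
  qed
qed

lemma U_FF_cone_ring: "U_FF cone_ring"
  by (intro U_FF_if_no_irreducibles cone_ring.not_irreducible_if_all_squares cone_ring_squares)

lemma not_U_FF_UP_cone_ring: "\<not> U_FF (UP cone_ring)"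
proof (rule cone_poly.not_U_FF_if_infinitely_many_factorizations)
  let ?a = "left_factor 0 \<otimes>\<^bsub>UP cone_ring\<^esub> right_factor 0"
  show "?a \<in> carrier (mult_of (UP cone_ring))"
    using factors_in_carrier[of 0] cone_poly.mult_of.m_closed by simp
  show "infinite {0..1::rat}"
    by simp
  fix B assume B: "B \<in> {0..1::rat}"
  show "[left_factor B, right_factor B] \<in> factorizations (UP cone_ring) ?a"
    using cone_poly.two_irreducibles_in_factorizations[OF factors_in_carrier[OF B]
        left_factor_irreducible[OF B] right_factor_irreducible[OF B]]
    by (simp add: left_factor_mult_right_factor[OF B])
qed (rule factorizations_distinct)

theorem mainTheorem13:
  shows "\<exists>R :: nat set ring. domain R \<and> U_FF R \<and> \<not> U_FF (UP R)"
  using domain_cone_ring U_FF_cone_ring not_U_FF_UP_cone_ring by blast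

end
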